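(* There is no semi-equivelar map of type $(4^3,6)$ (three quadrilaterals and one hexagon around each vertex) on the closed surface of Euler characteristic $-1$. *)

theory Defs
  imports Main
begin

text \<open>A (finite, 2-dimensional) map is given combinatorially by its set of faces.
  Each face is a polygon, represented by the cyclic list of its (distinct) vertices.\<close>

definition face_edges :: "'a list \<Rightarrow> 'a set set" where
  "face_edges f = {{f ! i, f ! (Suc i mod length f)} | i. i < length f}"

definition map_verts :: "'a list set \<Rightarrow> 'a set" where
  "map_verts F = (\<Union>f\<in>F. set f)"

definition map_edges :: "'a list set \<Rightarrow> 'a set set" where
  "map_edges F = (\<Union>f\<in>F. face_edges f)"

definition faces_at :: "'a list set \<Rightarrow> 'a \<Rightarrow> 'a list set" where
  "faces_at F v = {f\<in>F. v \<in> set f}"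

definition face_cycle :: "'a list set \<Rightarrow> 'a \<Rightarrow> 'a list list \<Rightarrow> bool" where
  "face_cycle F v fs \<longleftrightarrow>
     distinct fs \<and> length fs \<ge> 3 \<and> set fs = faces_at F v \<and>
     (\<forall>i<length fs. \<exists>e. v \<in> e \<and>
        e \<in> face_edges (fs ! i) \<and> e \<in> face_edges (fs ! (Suc i mod length fs)))"

text \<open>Polyhedral map on a closed (connected) surface: faces are polygons
  (at least 3 distinct vertices), two distinct faces meet in the empty set,
  a vertex or an edge, every edge lies in exactly two faces, the faces around
  every vertex form a single cycle (so the link of each vertex is a circle),
  and the edge graph is connected.\<close>
definition polyhedral_map :: "'a list set \<Rightarrow> bool" where
  "polyhedral_map F \<longleftrightarrow>
     finite F \<and> F \<noteq> {} \<and>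
     (\<forall>f\<in>F. distinct f \<and> length f \<ge> 3) \<and>
     (\<forall>f\<in>F. \<forall>g\<in>F. f \<noteq> g \<longrightarrow>
        set f \<inter> set g = {} \<or> card (set f \<inter> set g) = 1 \<or>
        set f \<inter> set g \<in> face_edges f \<inter> face_edges g) \<and>
     (\<forall>e\<in>map_edges F. card {f\<in>F. e \<in> face_edges f} = 2) \<and>
     (\<forall>v\<in>map_verts F. \<exists>fs. face_cycle F v fs) \<and>
     (\<forall>u\<in>map_verts F. \<forall>w\<in>map_verts F.
        (u, w) \<in> {(x, y). {x, y} \<in> map_edges F}\<^sup>*)"

definition euler_char :: "'a list set \<Rightarrow> int" where
  "euler_char F = int (card (map_verts F)) - int (card (map_edges F)) + int (card F)"

definition semi_equivelar_4_3_6 :: "'a list set \<Rightarrow> bool" where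
  "semi_equivelar_4_3_6 F \<longleftrightarrow> polyhedral_map F \<and>
     (\<forall>v\<in>map_verts F. \<exists>fs. face_cycle F v fs \<and> map length fs = [4, 4, 4, 6])"

end

theory Submission
  imports Defs
begin

text \<open>Double counting the incidences of vertices with quadrilaterals and hexagons, and of edges
  with faces, gives \<open>V = 6H\<close>, \<open>4Q = 3V\<close> and \<open>2E = 6H + 4Q\<close>, hence \<open>2\<chi> = -H\<close>. So \<open>\<chi> = -1\<close>
  forces exactly two hexagons and nine quadrilaterals. Every vertex lies on exactly one of the
  two hexagons, and two distinct faces share at most an edge, so each quadrilateral meets each
  hexagon in an edge. Since an edge lies in only two faces, different quadrilaterals meet a
  fixed hexagon in different edges; but a hexagon has only six edges.\<close>

lemma face_edges_eq_image:
  "face_edges f = (\<lambda>i. {f ! i, f ! (Suc i mod length f)}) ` {..<length f}"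
  by (auto simp: face_edges_def)

lemma finite_face_edges: "finite (face_edges f)"
  by (simp add: face_edges_eq_image)

lemma card_face_edges_le: "card (face_edges f) \<le> length f"
  unfolding face_edges_eq_image using card_image_le[of "{..<length f}"] by simp

lemma card_le_2_if_in_face_edges: "e \<in> face_edges f \<Longrightarrow> card e \<le> 2"
  unfolding face_edges_def by (auto simp: card_insert_if)

lemma successor_mod_not_involutive:
  assumes "i < n" "j < n" "3 \<le> n" "Suc i mod n = j" "Suc j mod n = i"
  shows False
proof -
  have "Suc i mod n = (if Suc i = n then 0 else Suc i)"
       "Suc j mod n = (if Suc j = n then 0 else Suc j)"
    using assms(1,2) by auto
  then show False using assms by (auto split: if_splits)
qed

lemma card_face_edges:
  assumes "distinct f" "3 \<le> length f"
  shows "card (face_edges f) = length f"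
proof -
  let ?n = "length f"
  have "inj_on (\<lambda>i. {f ! i, f ! (Suc i mod ?n)}) {..<?n}"
  proof (rule inj_onI)
    fix i j assume i: "i \<in> {..<?n}" and j: "j \<in> {..<?n}"
      and eq: "{f ! i, f ! (Suc i mod ?n)} = {f ! j, f ! (Suc j mod ?n)}"
    have succ_less: "Suc k mod ?n < ?n" for k using assms(2) by (intro mod_less_divisor) linarith
    show "i = j"
    proof (rule ccontr)
      assume "i \<noteq> j"
      with i j assms(1) have "f ! i \<noteq> f ! j" by (simp add: nth_eq_iff_index_eq)
      with eq have "f ! (Suc i mod ?n) = f ! j" "f ! (Suc j mod ?n) = f ! i"
        by (auto simp: doubleton_eq_iff)
      with i j succ_less assms(1) have "Suc i mod ?n = j" "Suc j mod ?n = i"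
        by (simp_all add: nth_eq_iff_index_eq)
      with i j assms(2) show False using successor_mod_not_involutive by auto
    qed
  qed
  then show ?thesis unfolding face_edges_eq_image by (simp add: card_image)
qed

definition faces_of_length :: "'a list set \<Rightarrow> nat \<Rightarrow> 'a list set" where
  "faces_of_length F n = {f\<in>F. length f = n}"

lemma finite_map_verts: "polyhedral_map F \<Longrightarrow> finite (map_verts F)"
  by (auto simp: polyhedral_map_def map_verts_def)

lemma finite_map_edges: "polyhedral_map F \<Longrightarrow> finite (map_edges F)"
  by (auto simp: polyhedral_map_def map_edges_def finite_face_edges)

lemma set_face_subset_map_verts: "f \<in> F \<Longrightarrow> set f \<subseteq> map_verts F"
  by (auto simp: map_verts_def)

lemma sum_card_face_edges:
  assumes "polyhedral_map F"
  shows "(\<Sum>f\<in>F. card (face_edges f)) = 2 * card (map_edges F)"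
proof -
  have "(\<Sum>f\<in>F. card {e\<in>map_edges F. e \<in> face_edges f}) = 2 * card (map_edges F)"
    using assms finite_map_edges[OF assms]
    by (intro sum_multicount) (auto simp: polyhedral_map_def)
  moreover have "{e\<in>map_edges F. e \<in> face_edges f} = face_edges f" if "f \<in> F" for f
    using that by (auto simp: map_edges_def)
  ultimately show ?thesis by simp
qed

lemma sum_card_faces_through_vertex:
  assumes "polyhedral_map F" "S \<subseteq> F"
    and "\<And>v. v \<in> map_verts F \<Longrightarrow> card {f\<in>S. v \<in> set f} = k"
  shows "(\<Sum>f\<in>S. card (set f)) = k * card (map_verts F)"
proof -
  have "finite S" using assms(1,2) finite_subset by (auto simp: polyhedral_map_def)
  then have "(\<Sum>f\<in>S. card {v\<in>map_verts F. v \<in> set f}) = k * card (map_verts F)"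
    using assms finite_map_verts by (intro sum_multicount) auto
  moreover have "{v\<in>map_verts F. v \<in> set f} = set f" if "f \<in> S" for f
    using that assms(2) set_face_subset_map_verts by blast
  ultimately show ?thesis by simp
qed

lemma polyhedral_map_meet_in_edge:
  assumes "polyhedral_map F" "f \<in> F" "g \<in> F" "f \<noteq> g" "2 \<le> card (set f \<inter> set g)"
  shows "set f \<inter> set g \<in> face_edges f \<inter> face_edges g"
  using assms unfolding polyhedral_map_def by fastforce

lemma polyhedral_map_card_inter_le_2:
  assumes "polyhedral_map F" "f \<in> F" "g \<in> F" "f \<noteq> g"
  shows "card (set f \<inter> set g) \<le> 2"
  using polyhedral_map_meet_in_edge[OF assms] card_le_2_if_in_face_edges by fastforce

lemma polyhedral_map_card_inter_ge_2_if_covered: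
  assumes "polyhedral_map F" "Q \<in> F" "H \<in> F" "H' \<in> F" "Q \<noteq> H" "Q \<noteq> H'"
    and "4 \<le> card (set Q)" "set Q \<subseteq> set H \<union> set H'"
  shows "2 \<le> card (set Q \<inter> set H)"
proof -
  have "set Q = (set Q \<inter> set H) \<union> (set Q \<inter> set H')" using assms(8) by blast
  then have "card (set Q) \<le> card (set Q \<inter> set H) + card (set Q \<inter> set H')"
    by (metis card_Un_le)
  then show ?thesis
    using assms(7) polyhedral_map_card_inter_le_2[OF assms(1,2,4,6)] by linarith
qed

lemma polyhedral_map_card_faces_meeting_face_le:
  assumes "polyhedral_map F" "H \<in> F"
  shows "card {f\<in>F - {H}. 2 \<le> card (set f \<inter> set H)} \<le> length H"
proof -
  let ?M = "{f\<in>F - {H}. 2 \<le> card (set f \<inter> set H)}"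
  have edge: "set f \<inter> set H \<in> face_edges f \<inter> face_edges H" if "f \<in> ?M" for f
    using that polyhedral_map_meet_in_edge[OF assms(1) _ assms(2)] by blast
  have "inj_on (\<lambda>f. set f \<inter> set H) ?M"
  proof (rule inj_onI)
    fix f g assume f: "f \<in> ?M" and g: "g \<in> ?M" and eq: "set f \<inter> set H = set g \<inter> set H"
    show "f = g"
    proof (rule ccontr)
      assume "f \<noteq> g"
      define e where "e = set f \<inter> set H"
      have "e \<in> map_edges F" using edge[OF f] assms(2) by (auto simp: e_def map_edges_def)
      then have two: "card {f'\<in>F. e \<in> face_edges f'} = 2"
        using assms(1) by (simp add: polyhedral_map_def)
      have "{H, f, g} \<subseteq> {f'\<in>F. e \<in> face_edges f'}"
        using edge[OF f] edge[OF g] eq f g assms(2) by (auto simp: e_def)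
      moreover have "card {H, f, g} = 3" using \<open>f \<noteq> g\<close> f g by auto
      moreover have "finite F" using assms(1) by (simp add: polyhedral_map_def)
      ultimately show False using two card_mono[of "{f'\<in>F. e \<in> face_edges f'}" "{H, f, g}"]
        by simp
    qed
  qed
  then have "card ?M \<le> card (face_edges H)"
    using edge by (intro card_inj_on_le) (auto simp: finite_face_edges)
  then show ?thesis using card_face_edges_le[of H] by linarith
qed

lemma semi_equivelar_4_3_6_polyhedral_map: "semi_equivelar_4_3_6 F \<Longrightarrow> polyhedral_map F"
  by (simp add: semi_equivelar_4_3_6_def)

lemma semi_equivelar_4_3_6_faces_through_vertex:
  assumes "semi_equivelar_4_3_6 F" "v \<in> map_verts F"
  obtains Q1 Q2 Q3 H where "{f\<in>F. v \<in> set f} = {Q1, Q2, Q3, H}" "distinct [Q1, Q2, Q3, H]"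
    "length Q1 = 4" "length Q2 = 4" "length Q3 = 4" "length H = 6"
proof -
  obtain fs where fs: "face_cycle F v fs" "map length fs = [4, 4, 4, 6]"
    using assms by (auto simp: semi_equivelar_4_3_6_def)
  have "length fs = length (map length fs)" by simp
  with fs(2) have "length fs = 4" by simp
  then obtain Q1 Q2 Q3 H where fs_eq: "fs = [Q1, Q2, Q3, H]"
    by (auto simp: length_Suc_conv numeral_eq_Suc)
  have "set fs = faces_at F v" "distinct fs" using fs(1) by (simp_all add: face_cycle_def)
  then have "{f\<in>F. v \<in> set f} = {Q1, Q2, Q3, H}" "distinct [Q1, Q2, Q3, H]"
    by (simp_all add: fs_eq faces_at_def)
  moreover have "length Q1 = 4" "length Q2 = 4" "length Q3 = 4" "length H = 6"
    using fs(2) by (simp_all add: fs_eq)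
  ultimately show thesis by (rule that)
qed

lemma semi_equivelar_4_3_6_card_faces_through_vertex:
  assumes "semi_equivelar_4_3_6 F" "v \<in> map_verts F"
  shows "card {f\<in>faces_of_length F 6. v \<in> set f} = 1"
    and "card {f\<in>faces_of_length F 4. v \<in> set f} = 3"
proof -
  obtain Q1 Q2 Q3 H where faces: "{f\<in>F. v \<in> set f} = {Q1, Q2, Q3, H}"
    and "distinct [Q1, Q2, Q3, H]"
    and len: "length Q1 = 4" "length Q2 = 4" "length Q3 = 4" "length H = 6"
    by (rule semi_equivelar_4_3_6_faces_through_vertex[OF assms])
  have "{f\<in>faces_of_length F n. v \<in> set f} = {f\<in>{Q1, Q2, Q3, H}. length f = n}" for n
    using faces unfolding faces_of_length_def by blast
  then have "{f\<in>faces_of_length F 6. v \<in> set f} = {H}"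
    and "{f\<in>faces_of_length F 4. v \<in> set f} = {Q1, Q2, Q3}"
    using len by auto
  then show "card {f\<in>faces_of_length F 6. v \<in> set f} = 1"
    and "card {f\<in>faces_of_length F 4. v \<in> set f} = 3"
    using \<open>distinct [Q1, Q2, Q3, H]\<close> by auto
qed

lemma semi_equivelar_4_3_6_face_length:
  assumes "semi_equivelar_4_3_6 F" "f \<in> F"
  shows "length f = 4 \<or> length f = 6"
proof -
  have "polyhedral_map F" using assms(1) by (rule semi_equivelar_4_3_6_polyhedral_map)
  with assms(2) have "3 \<le> length f" by (simp add: polyhedral_map_def)
  then have "f ! 0 \<in> set f" by (intro nth_mem) linarith
  then have "f ! 0 \<in> map_verts F" using assms(2) set_face_subset_map_verts by blast
  then obtain Q1 Q2 Q3 H where faces: "{g\<in>F. f ! 0 \<in> set g} = {Q1, Q2, Q3, H}"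
    and "distinct [Q1, Q2, Q3, H]"
    and "length Q1 = 4" "length Q2 = 4" "length Q3 = 4" "length H = 6"
    by (rule semi_equivelar_4_3_6_faces_through_vertex[OF assms(1)])
  moreover have "f \<in> {g\<in>F. f ! 0 \<in> set g}" using assms(2) \<open>f ! 0 \<in> set f\<close> by simp
  ultimately show ?thesis by auto
qed

lemma semi_equivelar_4_3_6_counts:
  assumes "semi_equivelar_4_3_6 F"
  defines "Q \<equiv> faces_of_length F 4" and "H \<equiv> faces_of_length F 6"
  shows "card (map_verts F) = 6 * card H"
    and "4 * card Q = 3 * card (map_verts F)"
    and "card F = card Q + card H"
    and "2 * card (map_edges F) = 4 * card Q + 6 * card H"
proof -
  have pm: "polyhedral_map F" using assms(1) by (rule semi_equivelar_4_3_6_polyhedral_map)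
  then have finite: "finite F" and face: "\<And>f. f \<in> F \<Longrightarrow> distinct f \<and> 3 \<le> length f"
    by (auto simp: polyhedral_map_def)
  have card_set: "card (set f) = length f" if "f \<in> F" for f
    using face[OF that] by (simp add: distinct_card)
  have card_edges: "card (face_edges f) = length f" if "f \<in> F" for f
    using face[OF that] card_face_edges by blast
  have sum_length: "(\<Sum>f\<in>faces_of_length F n. g f) = n * card (faces_of_length F n)"
    if "\<And>f. f \<in> F \<Longrightarrow> g f = length f" for g :: "'a list \<Rightarrow> nat" and n
  proof -
    have "(\<Sum>f\<in>faces_of_length F n. g f) = (\<Sum>f\<in>faces_of_length F n. n)"
      using that by (intro sum.cong) (auto simp: faces_of_length_def)
    then show ?thesis by simp
  qed
  have sub: "Q \<subseteq> F" "H \<subseteq> F" by (auto simp: Q_def H_def faces_of_length_def)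
  have split: "F = Q \<union> H" "Q \<inter> H = {}"
    using semi_equivelar_4_3_6_face_length[OF assms(1)] by (auto simp: Q_def H_def faces_of_length_def)
  have "(\<Sum>f\<in>H. card (set f)) = 1 * card (map_verts F)"
    using semi_equivelar_4_3_6_card_faces_through_vertex(1)[OF assms(1)]
    by (intro sum_card_faces_through_vertex[OF pm sub(2)]) (simp add: H_def)
  then show "card (map_verts F) = 6 * card H"
    using sum_length[OF card_set, of 6] by (simp add: H_def)
  have "(\<Sum>f\<in>Q. card (set f)) = 3 * card (map_verts F)"
    using semi_equivelar_4_3_6_card_faces_through_vertex(2)[OF assms(1)]
    by (intro sum_card_faces_through_vertex[OF pm sub(1)]) (simp add: Q_def)
  then show "4 * card Q = 3 * card (map_verts F)"
    using sum_length[OF card_set, of 4] by (simp add: Q_def)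
  have finite_QH: "finite Q" "finite H" using finite sub by (auto intro: finite_subset)
  with split show "card F = card Q + card H" by (simp add: card_Un_disjoint)
  have "2 * card (map_edges F) = (\<Sum>f\<in>Q \<union> H. card (face_edges f))"
    using sum_card_face_edges[OF pm] split(1) by simp
  also have "\<dots> = (\<Sum>f\<in>Q. card (face_edges f)) + (\<Sum>f\<in>H. card (face_edges f))"
    using finite_QH split(2) by (rule sum.union_disjoint)
  also have "\<dots> = 4 * card Q + 6 * card H"
    using sum_length[OF card_edges, of 4] sum_length[OF card_edges, of 6] by (simp add: Q_def H_def)
  finally show "2 * card (map_edges F) = 4 * card Q + 6 * card H" .
qed

lemma semi_equivelar_4_3_6_euler_char:
  assumes "semi_equivelar_4_3_6 F"
  shows "2 * euler_char F = - int (card (faces_of_length F 6))"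
    and "2 * card (faces_of_length F 4) = 9 * card (faces_of_length F 6)"
proof -
  note counts = semi_equivelar_4_3_6_counts[OF assms]
  then show "2 * card (faces_of_length F 4) = 9 * card (faces_of_length F 6)" by linarith
  from counts[THEN arg_cong[of _ _ int]]
  show "2 * euler_char F = - int (card (faces_of_length F 6))"
    unfolding euler_char_def by simp
qed

lemma semi_equivelar_4_3_6_vertex_on_hexagon:
  assumes "semi_equivelar_4_3_6 F" "v \<in> map_verts F"
  obtains H where "H \<in> faces_of_length F 6" "v \<in> set H"
proof -
  have "card {f\<in>faces_of_length F 6. v \<in> set f} = 1"
    by (rule semi_equivelar_4_3_6_card_faces_through_vertex(1)[OF assms])
  then have "{f\<in>faces_of_length F 6. v \<in> set f} \<noteq> {}" by (metis card.empty zero_neq_one)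
  then show thesis using that by blast
qed

lemma semi_equivelar_4_3_6_card_quadrilaterals_le_if_two_hexagons:
  assumes "semi_equivelar_4_3_6 F" "faces_of_length F 6 = {H1, H2}"
  shows "card (faces_of_length F 4) \<le> 6"
proof -
  have pm: "polyhedral_map F" using assms(1) by (rule semi_equivelar_4_3_6_polyhedral_map)
  have H: "H1 \<in> F" "length H1 = 6" "H2 \<in> F" "length H2 = 6"
    using assms(2) by (auto simp: faces_of_length_def)
  have covered: "set f \<subseteq> set H1 \<union> set H2" if "f \<in> F" for f
  proof
    fix v assume "v \<in> set f"
    with that have "v \<in> map_verts F" using set_face_subset_map_verts by blast
    then show "v \<in> set H1 \<union> set H2"
      using assms semi_equivelar_4_3_6_vertex_on_hexagon by (metis Un_iff insertE singletonD)
  qed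
  have "faces_of_length F 4 \<subseteq> {f\<in>F - {H1}. 2 \<le> card (set f \<inter> set H1)}"
  proof
    fix Q assume "Q \<in> faces_of_length F 4"
    then have Q: "Q \<in> F" "length Q = 4" by (auto simp: faces_of_length_def)
    with pm have "card (set Q) = 4" by (simp add: polyhedral_map_def distinct_card)
    moreover have "Q \<noteq> H1" "Q \<noteq> H2" using Q H by auto
    ultimately show "Q \<in> {f\<in>F - {H1}. 2 \<le> card (set f \<inter> set H1)}"
      using polyhedral_map_card_inter_ge_2_if_covered[OF pm Q(1) H(1,3)] covered[OF Q(1)] Q(1)
      by simp
  qed
  then have "card (faces_of_length F 4) \<le> card {f\<in>F - {H1}. 2 \<le> card (set f \<inter> set H1)}"
    using pm by (intro card_mono) (simp_all add: polyhedral_map_def)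
  then show ?thesis
    using polyhedral_map_card_faces_meeting_face_le[OF pm H(1)] H(2) by linarith
qed

theorem lemma4p4:
  fixes F :: "'a list set"
  shows "\<not> (semi_equivelar_4_3_6 F \<and> euler_char F = -1)"
proof
  assume "semi_equivelar_4_3_6 F \<and> euler_char F = -1"
  then have se: "semi_equivelar_4_3_6 F" and "euler_char F = -1" by blast+
  then have "card (faces_of_length F 6) = 2" and "card (faces_of_length F 4) = 9"
    using semi_equivelar_4_3_6_euler_char[OF se] by linarith+
  moreover obtain H1 H2 where "faces_of_length F 6 = {H1, H2}"
    using \<open>card (faces_of_length F 6) = 2\<close> by (metis card_2_iff)
  ultimately show False
    using semi_equivelar_4_3_6_card_quadrilaterals_le_if_two_hexagons[OF se] by fastforce
qed

end
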